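(* Suppose $(\varepsilon,\beta,\gamma;(12))\in\mathrm{Par}(n)$. If $\beta$ has a cycle of odd length $d$, then $\gamma$ has at least one cycle whose length divides $d$. Here fixed points are regarded as cycles of length $1$.
   Context: A Latin square of order $n$ is an $n\times n$ array with rows, columns and symbols indexed by $[n]$, each symbol occurring once in each row and each column, with triple set $O(L)$. Permutations act on the right; $\varepsilon$ is the identity. A paratopism $(\alpha,\beta,\gamma;(12))$ maps $L$ to $L^\sigma$ with triple set $\{(y\beta,x\alpha,z\gamma):(x,y,z)\in O(L)\}$; it is an autoparatopism of $L$ if $L^\sigma=L$. $\mathrm{Par}(n)$ is the set of paratopisms that are autoparatopisms of at least one Latin square of order $n$. *)

theory Defs
  imports "HOL-Combinatorics.Permutations"
begin

text \<open>Indices, rows, columns and symbols range over [n], rendered as {0..<n}.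
A Latin square is given by its triple set O(L).\<close>

definition latin_square :: "nat \<Rightarrow> (nat \<times> nat \<times> nat) set \<Rightarrow> bool" where
  "latin_square n T \<longleftrightarrow>
     T \<subseteq> {0..<n} \<times> {0..<n} \<times> {0..<n} \<and>
     (\<forall>x\<in>{0..<n}. \<forall>y\<in>{0..<n}. \<exists>!z. (x, y, z) \<in> T) \<and>
     (\<forall>x\<in>{0..<n}. \<forall>z\<in>{0..<n}. \<exists>!y. (x, y, z) \<in> T) \<and>
     (\<forall>y\<in>{0..<n}. \<forall>z\<in>{0..<n}. \<exists>!x. (x, y, z) \<in> T)"

text \<open>Image of a triple set under the paratopism (alpha,beta,gamma;(12)):
  (x,y,z) maps to (y beta, x alpha, z gamma); permutations act on the right, so y beta = beta y.\<close>

definition paratopism12_image ::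
  "(nat \<Rightarrow> nat) \<Rightarrow> (nat \<Rightarrow> nat) \<Rightarrow> (nat \<Rightarrow> nat) \<Rightarrow> (nat \<times> nat \<times> nat) set \<Rightarrow> (nat \<times> nat \<times> nat) set" where
  "paratopism12_image \<alpha> \<beta> \<gamma> T = (\<lambda>(x, y, z). (\<beta> y, \<alpha> x, \<gamma> z)) ` T"

definition Par12 :: "nat \<Rightarrow> ((nat \<Rightarrow> nat) \<times> (nat \<Rightarrow> nat) \<times> (nat \<Rightarrow> nat)) set" where
  "Par12 n = {(\<alpha>, \<beta>, \<gamma>). \<alpha> permutes {0..<n} \<and> \<beta> permutes {0..<n} \<and> \<gamma> permutes {0..<n} \<and>
      (\<exists>T. latin_square n T \<and> paratopism12_image \<alpha> \<beta> \<gamma> T = T)}"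

definition cycle_length :: "(nat \<Rightarrow> nat) \<Rightarrow> nat \<Rightarrow> nat" where
  "cycle_length p x = (LEAST k. 0 < k \<and> (p ^^ k) x = x)"

end

theory Submission
  imports Defs "HOL-Combinatorics.Cycles"
begin

text \<open>If (\<epsilon>,\<beta>,\<gamma>;(12)) fixes L, applying it twice maps the cell (a,b) with symbol c to
  (a\<beta>,b\<beta>) with symbol c\<gamma>^2. For a cycle of \<beta> of odd length d = 2m+1 through x, start at
  the cell (x, x\<beta>^m) with symbol c: m double steps and one single step return to the same
  cell with symbol c\<gamma>^d, so c\<gamma>^d = c and the \<gamma>-cycle of c has length dividing d.\<close>

lemma cycle_length_eq_least_power: "cycle_length p x = least_power p x"
  unfolding cycle_length_def least_power_def by (simp add: conj_commute)

lemma latin_square_cell_exists: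
  assumes "latin_square n T" "x \<in> {0..<n}" "y \<in> {0..<n}"
  obtains z where "z \<in> {0..<n}" "(x, y, z) \<in> T"
proof -
  from assms(1) have sub: "T \<subseteq> {0..<n} \<times> {0..<n} \<times> {0..<n}"
    and cell: "\<forall>x\<in>{0..<n}. \<forall>y\<in>{0..<n}. \<exists>!z. (x, y, z) \<in> T"
    unfolding latin_square_def by simp_all
  from cell assms(2,3) obtain z where "(x, y, z) \<in> T" by (meson ex1_implies_ex)
  with sub that show thesis by blast
qed

lemma latin_square_symbol_unique:
  assumes "latin_square n T" "(x, y, z) \<in> T" "(x, y, z') \<in> T"
  shows "z = z'"
  using assms unfolding latin_square_def by blast

lemma autoparatopism12_step:
  assumes "paratopism12_image \<alpha> \<beta> \<gamma> T \<subseteq> T" "(a, b, c) \<in> T"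
  shows "(\<beta> b, \<alpha> a, \<gamma> c) \<in> T"
  using assms unfolding paratopism12_image_def by force

lemma autoparatopism12_iterate:
  assumes "paratopism12_image id \<beta> \<gamma> T \<subseteq> T" "(a, b, c) \<in> T"
  shows "((\<beta> ^^ k) a, (\<beta> ^^ k) b, (\<gamma> ^^ (2 * k)) c) \<in> T"
proof (induction k)
  case 0
  show ?case using assms(2) by simp
next
  case (Suc k)
  from autoparatopism12_step[OF assms(1) autoparatopism12_step[OF assms(1) Suc]]
  show ?case by simp
qed

lemma autoparatopism12_odd_power:
  assumes "paratopism12_image id \<beta> \<gamma> T \<subseteq> T" "(a, (\<beta> ^^ m) a, c) \<in> T"
  shows "((\<beta> ^^ (2 * m + 1)) a, (\<beta> ^^ m) a, (\<gamma> ^^ (2 * m + 1)) c) \<in> T"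
proof -
  have "((\<beta> ^^ m) a, (\<beta> ^^ m) ((\<beta> ^^ m) a), (\<gamma> ^^ (2 * m)) c) \<in> T"
    using autoparatopism12_iterate[OF assms] .
  from autoparatopism12_step[OF assms(1) this]
  have "(\<beta> ((\<beta> ^^ m) ((\<beta> ^^ m) a)), (\<beta> ^^ m) a, \<gamma> ((\<gamma> ^^ (2 * m)) c)) \<in> T"
    by (simp only: id_apply)
  moreover have "\<beta> ((\<beta> ^^ m) ((\<beta> ^^ m) a)) = (\<beta> ^^ (2 * m + 1)) a"
    by (simp add: funpow_add mult_2)
  moreover have "\<gamma> ((\<gamma> ^^ (2 * m)) c) = (\<gamma> ^^ (2 * m + 1)) c" by simp
  ultimately show ?thesis by (simp only:)
qed

theorem theorem4p3:
  fixes n d :: nat and \<beta> \<gamma> :: "nat \<Rightarrow> nat"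
  assumes "(id, \<beta>, \<gamma>) \<in> Par12 n"
    and "x \<in> {0..<n}" and "cycle_length \<beta> x = d" and "odd d"
  shows "\<exists>y\<in>{0..<n}. cycle_length \<gamma> y dvd d"
proof -
  from assms(1) obtain T where \<beta>: "\<beta> permutes {0..<n}" and L: "latin_square n T"
    and fixed: "paratopism12_image id \<beta> \<gamma> T = T"
    unfolding Par12_def by blast
  have "permutation \<beta>" using \<beta> permutation_permutes by blast
  then have \<beta>_d: "(\<beta> ^^ d) x = x"
    unfolding assms(3)[symmetric] cycle_length_eq_least_power by (rule least_power_of_permutation(1))
  obtain m where d: "d = 2 * m + 1" using assms(4) oddE by blast
  have "(\<beta> ^^ m) x \<in> {0..<n}" using \<beta> assms(2) by (rule permutes_in_funpow_image)
  then obtain c where c: "c \<in> {0..<n}" "(x, (\<beta> ^^ m) x, c) \<in> T"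
    using latin_square_cell_exists[OF L assms(2)] by blast
  have "(x, (\<beta> ^^ m) x, (\<gamma> ^^ d) c) \<in> T"
    using autoparatopism12_odd_power[OF equalityD1[OF fixed] c(2)] \<beta>_d unfolding d by simp
  with L have "(\<gamma> ^^ d) c = c" using c(2) by (rule latin_square_symbol_unique)
  then have "cycle_length \<gamma> c dvd d" unfolding cycle_length_eq_least_power by (rule least_power_minimal)
  then show ?thesis using c(1) by blast
qed

end
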